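(* Every approximant $A\in\mathcal A$ is in normal form with respect to the $\mathsf v$-reduction extended to $\Lambda_\bot$.
   Context: $\Lambda_\bot$ is the set of $\lambda$-terms possibly containing a constant $\bot$: $M::=V\mid MN$, with values $V::=\bot\mid x\mid\lambda x.M$, up to $\alpha$-conversion. Extended rules on $\Lambda_\bot$: $(\beta_v)$ $(\lambda x.M)V\to M\{x:=V\}$ if $V$ is a value (including $\bot$); $(\sigma_1)$ $(\lambda x.M)NP\to(\lambda x.MP)N$ if $x\notin\mathrm{FV}(P)$; $(\sigma_3)$ $V((\lambda x.M)N)\to(\lambda x.VM)N$ if $V$ is a value and $x\notin\mathrm{FV}(V)$; $\mathsf v$-reduction is the contextual closure of their union. Approximants $\mathcal A$ ($k\ge0$): $A::=B\mid C$; $B::=x\mid\lambda x.A\mid\bot\mid xBA_1\cdots A_k$; $C::=(\lambda x.A)(yBA_1\cdots A_k)$. *)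

theory Defs
  imports Main
begin

text \<open>Lambda-terms with a constant Bot, up to alpha-conversion, represented
  with de Bruijn indices (so alpha-equivalent terms are literally equal).\<close>

datatype trm = Bot | Var nat | Lam trm | App trm trm

fun is_value :: "trm \<Rightarrow> bool" where
  "is_value Bot = True"
| "is_value (Var x) = True"
| "is_value (Lam M) = True"
| "is_value (App M N) = False"

fun lift :: "trm \<Rightarrow> nat \<Rightarrow> trm" where
  "lift Bot k = Bot"
| "lift (Var i) k = (if i < k then Var i else Var (Suc i))"
| "lift (Lam M) k = Lam (lift M (Suc k))"
| "lift (App M N) k = App (lift M k) (lift N k)"

fun subst :: "trm \<Rightarrow> nat \<Rightarrow> trm \<Rightarrow> trm" where
  "subst Bot k N = Bot"
| "subst (Var i) k N = (if k < i then Var (i - 1) else if i = k then N else Var i)"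
| "subst (Lam M) k N = Lam (subst M (Suc k) (lift N 0))"
| "subst (App M1 M2) k N = App (subst M1 k N) (subst M2 k N)"

text \<open>v-reduction on Lambda_Bot: contextual closure of beta_v, sigma_1, sigma_3.
  The side conditions x \<notin> FV(P), x \<notin> FV(V) are realised by lifting.\<close>
inductive red_v :: "trm \<Rightarrow> trm \<Rightarrow> bool" (infix "\<rightarrow>\<^sub>v" 50) where
  beta_v: "is_value V \<Longrightarrow> App (Lam M) V \<rightarrow>\<^sub>v subst M 0 V"
| sigma1: "App (App (Lam M) N) P \<rightarrow>\<^sub>v App (Lam (App M (lift P 0))) N"
| sigma3: "is_value V \<Longrightarrow> App V (App (Lam M) N) \<rightarrow>\<^sub>v App (Lam (App (lift V 0) M)) N"
| ctx_lam: "M \<rightarrow>\<^sub>v M' \<Longrightarrow> Lam M \<rightarrow>\<^sub>v Lam M'"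
| ctx_appL: "M \<rightarrow>\<^sub>v M' \<Longrightarrow> App M N \<rightarrow>\<^sub>v App M' N"
| ctx_appR: "N \<rightarrow>\<^sub>v N' \<Longrightarrow> App M N \<rightarrow>\<^sub>v App M N'"

definition v_normal :: "trm \<Rightarrow> bool" where
  "v_normal M \<longleftrightarrow> \<not> (\<exists>M'. M \<rightarrow>\<^sub>v M')"

text \<open>Approximants: A ::= B | C; B ::= x | \<lambda>x.A | Bot | x B A1...Ak;
  C ::= (\<lambda>x.A)(y B A1...Ak), k \<ge> 0.\<close>
inductive approxA :: "trm \<Rightarrow> bool" and approxB :: "trm \<Rightarrow> bool" where
  A_B: "approxB M \<Longrightarrow> approxA M"
| A_C: "approxA A \<Longrightarrow> approxB B \<Longrightarrow> list_all approxA As \<Longrightarrow>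
        approxA (App (Lam A) (foldl App (App (Var y) B) As))"
| B_var: "approxB (Var x)"
| B_lam: "approxA A \<Longrightarrow> approxB (Lam A)"
| B_bot: "approxB Bot"
| B_app: "approxB B \<Longrightarrow> list_all approxA As \<Longrightarrow> approxB (foldl App (App (Var x) B) As)"

end

theory Submission
  imports Defs
begin

text \<open>Read with binary application, the spine x B A1 ... Ak of an approximant
  is a neutral term: an application headed by a variable, hence neither a value nor a
  \<lambda>-application. Every application in an approximant is therefore neutral or a redex
  (\<lambda>x.A) N with N neutral, so none of beta_v, sigma1, sigma3 fires at it, and its
  immediate subterms are again approximants.\<close>

inductive apxA :: "trm \<Rightarrow> bool" and apxB :: "trm \<Rightarrow> bool" and neutral :: "trm \<Rightarrow> bool"
where
  apxA_apxB: "apxB M \<Longrightarrow> apxA M"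
| apxA_redex: "apxA A \<Longrightarrow> neutral N \<Longrightarrow> apxA (App (Lam A) N)"
| apxB_Var: "apxB (Var x)"
| apxB_Lam: "apxA A \<Longrightarrow> apxB (Lam A)"
| apxB_Bot: "apxB Bot"
| apxB_neutral: "neutral M \<Longrightarrow> apxB M"
| neutral_Var_App: "apxB B \<Longrightarrow> neutral (App (Var y) B)"
| neutral_App: "neutral M \<Longrightarrow> apxA N \<Longrightarrow> neutral (App M N)"

lemma neutral_apxA: "neutral M \<Longrightarrow> apxA M"
  by (intro apxA_apxB apxB_neutral)

lemma neutral_not_value: "neutral M \<Longrightarrow> \<not> is_value M"
  by (auto elim: neutral.cases)

lemma not_neutral_Lam [simp]: "\<not> neutral (Lam M)"
  by (auto elim: neutral.cases)

lemma not_neutral_Lam_App [simp]: "\<not> neutral (App (Lam M) N)"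
  by (auto elim: neutral.cases)

lemma neutral_App_iff:
  "neutral (App M N) \<longleftrightarrow> (\<exists>y. M = Var y \<and> apxB N) \<or> (neutral M \<and> apxA N)"
  by (auto elim: neutral.cases intro: apxA_apxB_neutral.intros)

lemma apxA_App_iff:
  "apxA (App M N) \<longleftrightarrow> neutral (App M N) \<or> (\<exists>A. M = Lam A \<and> apxA A \<and> neutral N)"
  by (auto elim: apxA.cases apxB.cases intro: apxA_apxB_neutral.intros)

lemma apxB_Lam_iff: "apxB (Lam M) \<longleftrightarrow> apxA M"
  by (auto elim: apxB.cases intro: apxB_Lam)

lemma apxA_Lam_iff: "apxA (Lam M) \<longleftrightarrow> apxA M"
  by (auto elim: apxA.cases simp: apxB_Lam_iff intro: apxA_apxB apxB_Lam)

lemma neutral_foldl_App: "neutral M \<Longrightarrow> list_all apxA As \<Longrightarrow> neutral (foldl App M As)"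
  by (induction As arbitrary: M) (auto intro: neutral_App)

lemma approx_imp_apx: "(approxA M \<longrightarrow> apxA M) \<and> (approxB M \<longrightarrow> apxB M)"
proof (induction rule: approxA_approxB.induct)
  case (A_C A B As y)
  then have "neutral (foldl App (App (Var y) B) As)"
    by (auto intro: neutral_foldl_App neutral_Var_App elim: list.pred_mono_strong)
  with A_C show ?case
    by (auto intro: apxA_redex)
next
  case (B_app B As x)
  then have "neutral (foldl App (App (Var x) B) As)"
    by (auto intro: neutral_foldl_App neutral_Var_App elim: list.pred_mono_strong)
  then show ?case
    by (rule apxB_neutral)
qed (auto intro: apxA_apxB_neutral.intros)

lemma red_v_not_apxA: "M \<rightarrow>\<^sub>v M' \<Longrightarrow> \<not> apxA M"
proof (induction rule: red_v.induct)
  case (beta_v V M)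
  then show ?case
    by (auto simp: apxA_App_iff neutral_App_iff dest: neutral_not_value)
next
  case (sigma1 M N P)
  then show ?case
    by (auto simp: apxA_App_iff neutral_App_iff)
next
  case (sigma3 V M N)
  then show ?case
    by (auto simp: apxA_App_iff neutral_App_iff dest: neutral_not_value
        elim: apxB.cases)
next
  case (ctx_lam M M')
  then show ?case
    by (simp add: apxA_Lam_iff)
next
  case (ctx_appL M M' N)
  then show ?case
    by (auto simp: apxA_App_iff neutral_App_iff apxA_Lam_iff
        dest: neutral_apxA intro: apxA_apxB apxB_Var)
next
  case (ctx_appR N N' M)
  then show ?case
    by (auto simp: apxA_App_iff neutral_App_iff dest: neutral_apxA intro: apxA_apxB)
qed

theorem lemma2p3:
  assumes "approxA A"
  shows "v_normal A"
  using approx_imp_apx red_v_not_apxA assms unfolding v_normal_def by blast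

end
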